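(* Let $\epsilon>0$ and let $u^1,u^2$ be smooth functions on $[0,1]^2$; denote also by $u^1,u^2$ their restrictions to the grid $(x_i,y_j)=(i\Delta x,j\Delta y)$, $i=0,\dots,N-1$, $j=0,\dots,M-1$, $(N-1)\Delta x=(M-1)\Delta y=1$. Let $D_x=P_x^{-1}Q_x$, $D_y=P_y^{-1}Q_y$ be summation-by-parts operators with $P_x=\Delta x\,\mathrm{diag}(p^x_0,\dots,p^x_{N-1})$, $P_y=\Delta y\,\mathrm{diag}(p^y_0,\dots,p^y_{M-1})$, positive entries, $Q_x+Q_x^T=R_N-L_N$, $Q_y+Q_y^T=R_M-L_M$, and $p:=p^x_0=p^x_{N-1}=p^y_0=p^y_{M-1}$; assume moreover that these operators satisfy, for every smooth $\bar u$ with grid restriction $u$ and every grid function $w$, $\|D_x(u\circ w)-u\circ D_xw\|_{P_x}\le C_0\|\partial_x\bar u\|_{L^\infty}\|w\|_{P_x}$ (and analogously in $y$) with $C_0$ independent of the grid. Let $\mathbf V(t)=(V^1(t),V^2(t))$ solve the semi-discrete scheme $$ \mathbf V_t+u^1\circ\mathfrak{d}_x\mathbf V+u^2\circ\mathfrak{d}_y\mathbf V-C\mathbf V+\epsilon\,\mathfrak{curl}^2(\mathbf V)=\mathcal B\mathbf V,\qquad t>0, $$ (i.e. the scheme with homogeneous Dirichlet data $\mathbf g=0$), where $C=\begin{pmatrix}-\mathfrak{d}_yu^2 & \mathfrak{d}_yu^1\\ \mathfrak{d}_xu^2 & -\mathfrak{d}_xu^1\end{pmatrix}$ (entries acting by componentwise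 multiplication) and $$\mathcal B=(P_x^{-1}\otimes I_M)(\Sigma_{\mathcal L}\mathcal L+\Sigma_{\mathcal R}\mathcal R)+(I_N\otimes P_y^{-1})(\Sigma_{\mathcal D}\mathcal D+\Sigma_{\mathcal U}\mathcal U),$$ with diagonal penalty matrices $\Sigma_{\mathcal K}=\Sigma'_{\mathcal K}+\epsilon\Sigma''_{\mathcal K}$ ($\mathcal K\in\{\mathcal L,\mathcal R,\mathcal D,\mathcal U\}$), whose diagonal entries are indexed like grid functions, $(\sigma_{\mathcal K})_{i,j}$. Suppose the penalty parameters satisfy $$(\sigma'_{\mathcal R})_{N-1,j}\le \tfrac{u^{1,-}(1,y_j)}{2},\quad (\sigma'_{\mathcal L})_{0,j}\le-\tfrac{u^{1,+}(0,y_j)}{2},\quad (\sigma'_{\mathcal U})_{i,M-1}\le\tfrac{u^{2,-}(x_i,1)}{2},\quad (\sigma'_{\mathcal D})_{i,0}\le-\tfrac{u^{2,+}(x_i,0)}{2},$$ $$\sigma''_{\mathcal R}\le-\tfrac{1}{2p\Delta x},\quad \sigma''_{\mathcal L}\le-\tfrac{1}{2p\Delta x},\quad \sigma''_{\mathcal U}\le-\tfrac{1}{2p\Delta y},\quad \sigma''_{\mathcal D}\le-\tfrac{1}{2p\Delta y},$$ and all other entries are $0$. Then $$\|\mathbf V(t)\|_{\mathbf P}^2\le e^{ct}\|\mathbf V(0)\|_{\mathbf P}^2,$$ where $c$ is a constant depending on $u^1,u^2$ and their derivative approximations but not on $N$ or $M$.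
   Context: $R_n=\mathrm{diag}(0,\dots,0,1)$, $L_n=\mathrm{diag}(1,0,\dots,0)$ ($n\times n$), $I_n$ identity, $\otimes$ Kronecker product. $\mathfrak{d}_x=D_x\otimes I_M$, $\mathfrak{d}_y=I_N\otimes D_y$, $\mathbf P=P_x\otimes P_y$, $\mathcal R=R_N\otimes I_M$, $\mathcal L=L_N\otimes I_M$, $\mathcal U=I_N\otimes R_M$, $\mathcal D=I_N\otimes L_M$. Grid functions are ordered as $(w_{0,0},w_{0,1},\dots,w_{0,M-1},w_{1,0},\dots,w_{N-1,M-1})^T$; $(u\circ w)_k=u_kw_k$; $\|w\|_{P_x}=(w^TP_xw)^{1/2}$. $(v,w)_{\mathbf P}=v^T\mathbf Pw$, and for vector grid functions $(\mathbf V,\mathbf W)_{\mathbf P}=(V^1,W^1)_{\mathbf P}+(V^2,W^2)_{\mathbf P}$, $\|\mathbf V\|_{\mathbf P}=(\mathbf V,\mathbf V)_{\mathbf P}^{1/2}$; operators and $\mathcal B$ act on $\mathbf V$ componentwise. $\mathfrak{curl}^2(\mathbf V)=(-\mathfrak{d}_{yy}V^1+\mathfrak{d}_{xy}V^2,\ \mathfrak{d}_{xy}V^1-\mathfrak{d}_{xx}V^2)$ with $\mathfrak{d}_{xy}=\mathfrak{d}_x\mathfrak{d}_y$, etc. $u^{l,+}=\max(u^l,0)$, $u^{l,-}=\min(u^l,0)$. The $\Sigma''$ conditions are stated for scalar (constant) values $\sigma''_{\mathcal K}$ of the relevant boundary entries. *)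

theory Defs
  imports "HOL-Analysis.Analysis"
begin

fun iter_fderiv :: "'a::real_normed_vector list \<Rightarrow> ('a \<Rightarrow> real) \<Rightarrow> 'a \<Rightarrow> real" where
  "iter_fderiv [] f = f"
| "iter_fderiv (v # vs) f = (\<lambda>z. frechet_derivative (iter_fderiv vs f) (at z) v)"

definition smooth_on_open :: "'a::real_normed_vector set \<Rightarrow> ('a \<Rightarrow> real) \<Rightarrow> bool" where
  "smooth_on_open S f \<longleftrightarrow> open S \<and> (\<forall>vs. \<forall>z\<in>S. iter_fderiv vs f differentiable (at z))"

definition smooth_on_closed :: "'a::real_normed_vector set \<Rightarrow> ('a \<Rightarrow> real) \<Rightarrow> bool" where
  "smooth_on_closed K f \<longleftrightarrow> (\<exists>S. K \<subseteq> S \<and> smooth_on_open S f)"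

definition sup_deriv01 :: "(real \<Rightarrow> real) \<Rightarrow> real" where
  "sup_deriv01 f = Sup ((\<lambda>x. \<bar>deriv f x\<bar>) ` {0..1})"

text \<open>D = P^{-1} Q with P = h diag(p_0,...,p_{n-1}).\<close>
definition sbpD :: "real \<Rightarrow> (nat \<Rightarrow> real) \<Rightarrow> (nat \<Rightarrow> nat \<Rightarrow> real) \<Rightarrow> nat \<Rightarrow> nat \<Rightarrow> real" where
  "sbpD h p Q i k = Q i k / (h * p i)"

definition matvec :: "nat \<Rightarrow> (nat \<Rightarrow> nat \<Rightarrow> real) \<Rightarrow> (nat \<Rightarrow> real) \<Rightarrow> nat \<Rightarrow> real" where
  "matvec n A w = (\<lambda>i. \<Sum>k<n. A i k * w k)"

definition sbp_Q :: "nat \<Rightarrow> (nat \<Rightarrow> nat \<Rightarrow> real) \<Rightarrow> bool" where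
  "sbp_Q n Q \<longleftrightarrow> (\<forall>i<n. \<forall>k<n. Q i k + Q k i =
      (if i = n - 1 \<and> k = n - 1 then 1 else 0) - (if i = 0 \<and> k = 0 then 1 else 0))"

definition normsq1 :: "nat \<Rightarrow> real \<Rightarrow> (nat \<Rightarrow> real) \<Rightarrow> (nat \<Rightarrow> real) \<Rightarrow> real" where
  "normsq1 n h p w = (\<Sum>i<n. h * p i * (w i)\<^sup>2)"

definition commutator_bound :: "nat \<Rightarrow> real \<Rightarrow> (nat \<Rightarrow> real) \<Rightarrow> (nat \<Rightarrow> nat \<Rightarrow> real) \<Rightarrow> real \<Rightarrow> bool" where
  "commutator_bound n h p Q C0 \<longleftrightarrow>
     (\<forall>ub w. smooth_on_closed {0..1} ub \<longrightarrow>
        (let D = sbpD h p Q; u = (\<lambda>i. ub (real i * h)) in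
         sqrt (normsq1 n h p (\<lambda>i. matvec n D (\<lambda>k. u k * w k) i - u i * matvec n D w i))
           \<le> C0 * sup_deriv01 ub * sqrt (normsq1 n h p w)))"

text \<open>Grid functions are w i j with i < N, j < M (entry w_{i,j} of the paper's vector).
  \<open>dX\<close> is D_x \<otimes> I_M and \<open>dY\<close> is I_N \<otimes> D_y written out in indices.\<close>
definition dX :: "nat \<Rightarrow> (nat \<Rightarrow> nat \<Rightarrow> real) \<Rightarrow> (nat \<Rightarrow> nat \<Rightarrow> real) \<Rightarrow> nat \<Rightarrow> nat \<Rightarrow> real" where
  "dX N Dx w = (\<lambda>i j. \<Sum>k<N. Dx i k * w k j)"

definition dY :: "nat \<Rightarrow> (nat \<Rightarrow> nat \<Rightarrow> real) \<Rightarrow> (nat \<Rightarrow> nat \<Rightarrow> real) \<Rightarrow> nat \<Rightarrow> nat \<Rightarrow> real" where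
  "dY M Dy w = (\<lambda>i j. \<Sum>k<M. Dy j k * w i k)"

text \<open>Penalty operator
  B = (P_x^{-1} \<otimes> I)(S_L \<L> + S_R \<R>) + (I \<otimes> P_y^{-1})(S_D \<D> + S_U \<U>),
  with \<L> = L_N \<otimes> I_M etc. and diagonal S_K given by their entries S_K i j.\<close>
definition penB :: "nat \<Rightarrow> nat \<Rightarrow> real \<Rightarrow> real \<Rightarrow> (nat \<Rightarrow> real) \<Rightarrow> (nat \<Rightarrow> real)
   \<Rightarrow> (nat \<Rightarrow> nat \<Rightarrow> real) \<Rightarrow> (nat \<Rightarrow> nat \<Rightarrow> real) \<Rightarrow> (nat \<Rightarrow> nat \<Rightarrow> real) \<Rightarrow> (nat \<Rightarrow> nat \<Rightarrow> real)
   \<Rightarrow> (nat \<Rightarrow> nat \<Rightarrow> real) \<Rightarrow> nat \<Rightarrow> nat \<Rightarrow> real" where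
  "penB N M hx hy px py SL SR SD SU w = (\<lambda>i j.
     (SL i j * (if i = 0 then w i j else 0) + SR i j * (if i = N - 1 then w i j else 0)) / (hx * px i)
   + (SD i j * (if j = 0 then w i j else 0) + SU i j * (if j = M - 1 then w i j else 0)) / (hy * py j))"

definition ipP :: "nat \<Rightarrow> nat \<Rightarrow> real \<Rightarrow> real \<Rightarrow> (nat \<Rightarrow> real) \<Rightarrow> (nat \<Rightarrow> real)
   \<Rightarrow> (nat \<Rightarrow> nat \<Rightarrow> real) \<Rightarrow> (nat \<Rightarrow> nat \<Rightarrow> real) \<Rightarrow> real" where
  "ipP N M hx hy px py v w = (\<Sum>i<N. \<Sum>j<M. hx * px i * hy * py j * v i j * w i j)"

definition normsqP :: "nat \<Rightarrow> nat \<Rightarrow> real \<Rightarrow> real \<Rightarrow> (nat \<Rightarrow> real) \<Rightarrow> (nat \<Rightarrow> real)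
   \<Rightarrow> (nat \<Rightarrow> nat \<Rightarrow> real) \<Rightarrow> (nat \<Rightarrow> nat \<Rightarrow> real) \<Rightarrow> real" where
  "normsqP N M hx hy px py V1 V2 = ipP N M hx hy px py V1 V1 + ipP N M hx hy px py V2 V2"

definition pos_part :: "real \<Rightarrow> real" where "pos_part a = max a 0"
definition neg_part :: "real \<Rightarrow> real" where "neg_part a = min a 0"

end

theory Submission
  imports Defs
begin

text \<open>Energy method. Summation by parts turns the advective part of (V, d/dt V)_P into a
  commutator, which the hypothesis on the SBP operators bounds by a uniform bound on the
  derivatives of u along grid lines, plus boundary fluxes; the zero-order part is bounded by the
  derivative approximations of u; and (V, curl^2 V)_P equals ||curl V||_P^2 plus boundary terms.
  At every boundary node the upwind choice of Sigma' removes the inflowing part of the advective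
  flux, while Sigma'' \<le> -1/(2 p h) absorbs the tangential curl flux by Young's inequality at the
  cost of eps p h |curl V|^2 there; summed over the boundary, these costs are paid by
  eps ||curl V||_P^2, because the two end weights h p of every grid line are part of the norm.
  Hence d/dt ||V||_P^2 \<le> c ||V||_P^2, and Gronwall's inequality concludes.\<close>

section \<open>Restrictions of smooth functions to lines\<close>

lemma line_restriction_has_derivative:
  fixes g :: "'a::real_normed_vector \<Rightarrow> real"
  assumes "open S" and zS: "a + z *\<^sub>R d \<in> S" and "g differentiable (at (a + z *\<^sub>R d))"
    and eq: "\<And>x. a + x *\<^sub>R d \<in> S \<Longrightarrow> h x = g (a + x *\<^sub>R d)"
  shows "(h has_derivative (\<lambda>t. frechet_derivative g (at (a + z *\<^sub>R d)) (t *\<^sub>R d))) (at z)"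
proof -
  let ?e = "\<lambda>x::real. a + x *\<^sub>R d"
  have "(g has_derivative frechet_derivative g (at (?e z))) (at (?e z))"
    using assms(3) by (simp add: frechet_derivative_works)
  then have "((g \<circ> ?e) has_derivative frechet_derivative g (at (?e z)) \<circ> (\<lambda>t. t *\<^sub>R d)) (at z)"
    by (rule diff_chain_at[rotated]) (auto intro!: derivative_eq_intros)
  moreover have "open (?e -` S)"
    by (rule continuous_open_vimage[OF \<open>open S\<close>]) (auto intro!: continuous_intros)
  ultimately have "(h has_derivative frechet_derivative g (at (?e z)) \<circ> (\<lambda>t. t *\<^sub>R d)) (at z)"
    by (rule has_derivative_transform_within_open) (use zS eq in auto)
  then show ?thesis by (simp add: o_def)
qed

lemma iter_fderiv_line:
  assumes sm: "smooth_on_open S f" and "a + z *\<^sub>R d \<in> S"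
  shows "iter_fderiv vs (\<lambda>x. f (a + x *\<^sub>R d)) z = iter_fderiv (map (\<lambda>v. v *\<^sub>R d) vs) f (a + z *\<^sub>R d)"
  using assms(2)
proof (induction vs arbitrary: z)
  case (Cons v vs)
  have "(iter_fderiv vs (\<lambda>x. f (a + x *\<^sub>R d)) has_derivative
      (\<lambda>t. frechet_derivative (iter_fderiv (map (\<lambda>v. v *\<^sub>R d) vs) f) (at (a + z *\<^sub>R d)) (t *\<^sub>R d))) (at z)"
    by (rule line_restriction_has_derivative) (use sm Cons in \<open>auto simp: smooth_on_open_def\<close>)
  then show ?case by (simp add: frechet_derivative_at[symmetric])
qed simp

lemma smooth_on_open_line:
  assumes sm: "smooth_on_open S f"
  shows "smooth_on_open ((\<lambda>x. a + x *\<^sub>R d) -` S) (\<lambda>x. f (a + x *\<^sub>R d))"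
proof -
  have "iter_fderiv vs (\<lambda>x. f (a + x *\<^sub>R d)) differentiable (at z)" if "a + z *\<^sub>R d \<in> S" for vs z
  proof -
    have "(iter_fderiv vs (\<lambda>x. f (a + x *\<^sub>R d)) has_derivative
      (\<lambda>t. frechet_derivative (iter_fderiv (map (\<lambda>v. v *\<^sub>R d) vs) f) (at (a + z *\<^sub>R d)) (t *\<^sub>R d))) (at z)"
      by (rule line_restriction_has_derivative)
        (use sm that iter_fderiv_line[OF sm] in \<open>auto simp: smooth_on_open_def\<close>)
    then show ?thesis by (auto simp: differentiable_def)
  qed
  moreover have "open ((\<lambda>x. a + x *\<^sub>R d) -` S)"
    using sm by (auto simp: smooth_on_open_def intro!: continuous_open_vimage continuous_intros)
  ultimately show ?thesis by (auto simp: smooth_on_open_def)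
qed

lemma deriv_line:
  assumes sm: "smooth_on_open S f" and xS: "a + x *\<^sub>R d \<in> S"
  shows "deriv (\<lambda>x. f (a + x *\<^sub>R d)) x = frechet_derivative f (at (a + x *\<^sub>R d)) d"
proof -
  let ?f' = "frechet_derivative f (at (a + x *\<^sub>R d))"
  have "f differentiable (at (a + x *\<^sub>R d))"
    using sm xS iter_fderiv.simps(1) unfolding smooth_on_open_def by metis
  then have "(\<lambda>t. ?f' (t *\<^sub>R d)) = (*) (?f' d)"
    by (auto simp: fun_eq_iff frechet_derivative_works linear_scale dest: has_derivative_linear)
  moreover have "((\<lambda>x. f (a + x *\<^sub>R d)) has_derivative (\<lambda>t. ?f' (t *\<^sub>R d))) (at x)"
    by (rule line_restriction_has_derivative)
      (use sm xS \<open>f differentiable _\<close> in \<open>auto simp: smooth_on_open_def\<close>)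
  ultimately have "((\<lambda>x. f (a + x *\<^sub>R d)) has_real_derivative ?f' d) (at x)"
    by (simp add: has_field_derivative_def)
  then show ?thesis by (rule DERIV_imp_deriv)
qed

lemma sup_deriv01_bounds:
  assumes "\<And>x. x \<in> {0..1} \<Longrightarrow> \<bar>deriv f x\<bar> \<le> L"
  shows "0 \<le> sup_deriv01 f" and "sup_deriv01 f \<le> L"
proof -
  have bdd: "bdd_above ((\<lambda>x. \<bar>deriv f x\<bar>) ` {0..1})"
    by (rule bdd_aboveI2) (use assms in auto)
  have "\<bar>deriv f 0\<bar> \<le> sup_deriv01 f"
    unfolding sup_deriv01_def by (rule cSup_upper[OF _ bdd]) simp
  then show "0 \<le> sup_deriv01 f" by linarith
  show "sup_deriv01 f \<le> L"
    unfolding sup_deriv01_def using assms by (auto intro: cSup_least)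
qed

lemma smooth_line_restrictions_bounded:
  fixes f :: "'a::real_normed_vector \<Rightarrow> real"
  assumes "smooth_on_closed K f" and "compact K"
  obtains L where "\<And>a. \<forall>x\<in>{0..1}. a + x *\<^sub>R d \<in> K \<Longrightarrow>
      smooth_on_closed {0..1} (\<lambda>x. f (a + x *\<^sub>R d))
    \<and> 0 \<le> sup_deriv01 (\<lambda>x. f (a + x *\<^sub>R d)) \<and> sup_deriv01 (\<lambda>x. f (a + x *\<^sub>R d)) \<le> L"
proof -
  obtain S where KS: "K \<subseteq> S" and sm: "smooth_on_open S f"
    using assms(1) by (auto simp: smooth_on_closed_def)
  have "continuous_on K (\<lambda>z. frechet_derivative f (at z) d)"
  proof (rule continuous_at_imp_continuous_on, intro ballI)
    fix z assume "z \<in> K"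
    then have "iter_fderiv [d] f differentiable (at z)"
      using sm KS unfolding smooth_on_open_def by blast
    then show "isCont (\<lambda>z. frechet_derivative f (at z) d) z"
      by (simp add: differentiable_imp_continuous_within)
  qed
  then have "bounded ((\<lambda>z. frechet_derivative f (at z) d) ` K)"
    using \<open>compact K\<close> by (intro compact_imp_bounded compact_continuous_image)
  then obtain L where L: "\<And>z. z \<in> K \<Longrightarrow> \<bar>frechet_derivative f (at z) d\<bar> \<le> L"
    unfolding bounded_iff real_norm_def by blast
  show ?thesis
  proof (rule that, intro conjI)
    fix a assume aK: "\<forall>x\<in>{0..1}. a + x *\<^sub>R d \<in> K"
    then have "{0..1} \<subseteq> (\<lambda>x. a + x *\<^sub>R d) -` S" using KS by auto
    then show "smooth_on_closed {0..1} (\<lambda>x. f (a + x *\<^sub>R d))"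
      unfolding smooth_on_closed_def using smooth_on_open_line[OF sm] by blast
    have "\<bar>deriv (\<lambda>x. f (a + x *\<^sub>R d)) x\<bar> \<le> L" if "x \<in> {0..1}" for x
    proof -
      have "a + x *\<^sub>R d \<in> K" using aK that by blast
      then show ?thesis using KS L deriv_line[OF sm, of a x d] by auto
    qed
    then show "0 \<le> sup_deriv01 (\<lambda>x. f (a + x *\<^sub>R d))" "sup_deriv01 (\<lambda>x. f (a + x *\<^sub>R d)) \<le> L"
      by (fact sup_deriv01_bounds)+
  qed
qed

lemma smooth_coordinate_lines:
  assumes "smooth_on_closed ({0..1} \<times> {0..1}) f"
  obtains L where
    "\<And>y. y \<in> {0..1} \<Longrightarrow> smooth_on_closed {0..1} (\<lambda>x. f (x, y))
        \<and> 0 \<le> sup_deriv01 (\<lambda>x. f (x, y)) \<and> sup_deriv01 (\<lambda>x. f (x, y)) \<le> L"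
    "\<And>x. x \<in> {0..1} \<Longrightarrow> smooth_on_closed {0..1} (\<lambda>y. f (x, y))
        \<and> 0 \<le> sup_deriv01 (\<lambda>y. f (x, y)) \<and> sup_deriv01 (\<lambda>y. f (x, y)) \<le> L"
proof -
  have K: "compact ({0..1::real} \<times> {0..1::real})" by (simp add: compact_Times)
  obtain Lx where Lx: "\<And>a. \<forall>x\<in>{0..1}. a + x *\<^sub>R (1, 0) \<in> {0..1} \<times> {0..1} \<Longrightarrow>
      smooth_on_closed {0..1} (\<lambda>x. f (a + x *\<^sub>R (1, 0)))
    \<and> 0 \<le> sup_deriv01 (\<lambda>x. f (a + x *\<^sub>R (1, 0))) \<and> sup_deriv01 (\<lambda>x. f (a + x *\<^sub>R (1, 0))) \<le> Lx"
    using smooth_line_restrictions_bounded[OF assms K] by blast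
  obtain Ly where Ly: "\<And>a. \<forall>x\<in>{0..1}. a + x *\<^sub>R (0, 1) \<in> {0..1} \<times> {0..1} \<Longrightarrow>
      smooth_on_closed {0..1} (\<lambda>x. f (a + x *\<^sub>R (0, 1)))
    \<and> 0 \<le> sup_deriv01 (\<lambda>x. f (a + x *\<^sub>R (0, 1))) \<and> sup_deriv01 (\<lambda>x. f (a + x *\<^sub>R (0, 1))) \<le> Ly"
    using smooth_line_restrictions_bounded[OF assms K] by blast
  show ?thesis
  proof (rule that[of "max Lx Ly"])
    fix y :: real assume "y \<in> {0..1}"
    then show "smooth_on_closed {0..1} (\<lambda>x. f (x, y))
        \<and> 0 \<le> sup_deriv01 (\<lambda>x. f (x, y)) \<and> sup_deriv01 (\<lambda>x. f (x, y)) \<le> max Lx Ly"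
      using Lx[of "(0, y)"] by auto
  next
    fix x :: real assume "x \<in> {0..1}"
    then show "smooth_on_closed {0..1} (\<lambda>y. f (x, y))
        \<and> 0 \<le> sup_deriv01 (\<lambda>y. f (x, y)) \<and> sup_deriv01 (\<lambda>y. f (x, y)) \<le> max Lx Ly"
      using Ly[of "(x, 0)"] by auto
  qed
qed

section \<open>Summation by parts in one dimension\<close>

lemma sum_sum_delta:
  fixes f :: "nat \<Rightarrow> nat \<Rightarrow> 'a::comm_monoid_add"
  assumes "m < n"
  shows "(\<Sum>i<n. \<Sum>k<n. if i = m \<and> k = m then f i k else 0) = f m m"
proof -
  have "(\<Sum>k<n. if i = m \<and> k = m then f i k else 0) = (if i = m then f m m else 0)" for i
    using assms by (cases "i = m") auto
  then show ?thesis using assms by simp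
qed

lemma sbp_Q_summation_by_parts:
  assumes Q: "sbp_Q n Q" and "n \<ge> 1"
  shows "(\<Sum>i<n. a i * (\<Sum>k<n. Q i k * b k)) + (\<Sum>i<n. b i * (\<Sum>k<n. Q i k * a k))
         = a (n - 1) * b (n - 1) - a 0 * b 0"
proof -
  have "(\<Sum>i<n. b i * (\<Sum>k<n. Q i k * a k)) = (\<Sum>i<n. \<Sum>k<n. a i * b k * Q k i)"
    by (subst sum.swap) (simp add: sum_distrib_left ac_simps)
  then have "(\<Sum>i<n. a i * (\<Sum>k<n. Q i k * b k)) + (\<Sum>i<n. b i * (\<Sum>k<n. Q i k * a k))
      = (\<Sum>i<n. \<Sum>k<n. a i * b k * (Q i k + Q k i))"
    by (simp add: sum_distrib_left distrib_left sum.distrib ac_simps)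
  also have "\<dots> = (\<Sum>i<n. \<Sum>k<n. (if i = n - 1 \<and> k = n - 1 then a i * b k else 0)
                                 - (if i = 0 \<and> k = 0 then a i * b k else 0))"
    using Q unfolding sbp_Q_def by (intro sum.cong refl) auto
  also have "\<dots> = a (n - 1) * b (n - 1) - a 0 * b 0"
    using assms(2) by (simp add: sum_subtractf sum_sum_delta)
  finally show ?thesis .
qed

definition ip1 :: "nat \<Rightarrow> real \<Rightarrow> (nat \<Rightarrow> real) \<Rightarrow> (nat \<Rightarrow> real) \<Rightarrow> (nat \<Rightarrow> real) \<Rightarrow> real" where
  "ip1 n h p a b = (\<Sum>i<n. h * p i * a i * b i)"

lemma ip1_sbpD:
  assumes "\<forall>i<n. h * p i \<noteq> 0"
  shows "ip1 n h p a (matvec n (sbpD h p Q) b) = (\<Sum>i<n. a i * (\<Sum>k<n. Q i k * b k))"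
  unfolding ip1_def matvec_def sbpD_def
proof (intro sum.cong refl)
  fix i assume "i \<in> {..<n}"
  then have "h * p i \<noteq> 0" using assms by auto
  then show "h * p i * a i * (\<Sum>k<n. Q i k / (h * p i) * b k) = a i * (\<Sum>k<n. Q i k * b k)"
    by (simp add: sum_distrib_left field_simps)
qed

lemma ip1_sbpD_skew:
  assumes "sbp_Q n Q" and "n \<ge> 1" and "\<forall>i<n. h * p i \<noteq> 0"
  shows "ip1 n h p a (matvec n (sbpD h p Q) b) + ip1 n h p b (matvec n (sbpD h p Q) a)
         = a (n - 1) * b (n - 1) - a 0 * b 0"
  using sbp_Q_summation_by_parts[OF assms(1,2)] by (simp add: ip1_sbpD[OF assms(3)])

lemma ip1_self_nonneg:
  assumes "\<forall>i<n. h * p i > 0"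
  shows "0 \<le> ip1 n h p a a"
  unfolding ip1_def
proof (rule sum_nonneg)
  fix i assume "i \<in> {..<n}"
  then have "0 \<le> (h * p i) * (a i * a i)" using assms by (simp add: less_imp_le)
  then show "0 \<le> h * p i * a i * a i" by (simp add: mult.assoc)
qed

lemma ip1_Cauchy_Schwarz:
  assumes "\<forall>i<n. h * p i > 0"
  shows "(ip1 n h p a b)\<^sup>2 \<le> ip1 n h p a a * ip1 n h p b b"
proof -
  let ?a = "\<lambda>i. sqrt (h * p i) * a i" and ?b = "\<lambda>i. sqrt (h * p i) * b i"
  have "ip1 n h p a b = (\<Sum>i<n. ?a i * ?b i)" "ip1 n h p a a = (\<Sum>i<n. (?a i)\<^sup>2)"
    "ip1 n h p b b = (\<Sum>i<n. (?b i)\<^sup>2)"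
    unfolding ip1_def using assms by (auto intro!: sum.cong simp: power2_eq_square algebra_simps)
  then show ?thesis by (simp only: Cauchy_Schwarz_ineq_sum)
qed

lemma ip1_commutator_le:
  assumes "commutator_bound n h p Q C0" and "smooth_on_closed {0..1} ub"
    and "0 \<le> sup_deriv01 ub" and "sup_deriv01 ub \<le> L" and pos: "\<forall>i<n. h * p i > 0"
  shows "ip1 n h p w (\<lambda>i. matvec n (sbpD h p Q) (\<lambda>k. ub (real k * h) * w k) i
           - ub (real i * h) * matvec n (sbpD h p Q) w i) \<le> \<bar>C0\<bar> * L * ip1 n h p w w"
    (is "ip1 n h p w ?c \<le> _")
proof -
  have ww: "0 \<le> ip1 n h p w w"
    using ip1_self_nonneg[OF pos] .
  have comm: "sqrt (ip1 n h p ?c ?c) \<le> C0 * sup_deriv01 ub * sqrt (ip1 n h p w w)"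
    using assms(1,2) unfolding commutator_bound_def Let_def normsq1_def ip1_def
    by (simp add: power2_eq_square mult.assoc)
  have "C0 * sup_deriv01 ub \<le> \<bar>C0\<bar> * L"
    using assms(3,4) by (metis abs_ge_self abs_of_nonneg mult_mono' order.trans abs_ge_zero abs_mult)
  have "ip1 n h p w ?c \<le> sqrt (ip1 n h p w w) * sqrt (ip1 n h p ?c ?c)"
    using real_sqrt_le_mono[OF ip1_Cauchy_Schwarz[OF pos, of w ?c]]
    by (simp add: real_sqrt_mult)
  also have "\<dots> \<le> sqrt (ip1 n h p w w) * (C0 * sup_deriv01 ub * sqrt (ip1 n h p w w))"
    by (rule mult_left_mono[OF comm]) (simp add: ww)
  also have "\<dots> = C0 * sup_deriv01 ub * ip1 n h p w w"
    using ww by (simp add: ac_simps)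
  also have "\<dots> \<le> \<bar>C0\<bar> * L * ip1 n h p w w"
    by (rule mult_right_mono[OF \<open>C0 * sup_deriv01 ub \<le> \<bar>C0\<bar> * L\<close> ww])
  finally show ?thesis .
qed

section \<open>Grid functions on the square\<close>

lemma unit_mesh:
  assumes "(real n - 1) * h = 1" and "h > 0"
  shows "n \<ge> 2" and "real (n - 1) * h = 1" and "\<And>i. i < n \<Longrightarrow> real i * h \<in> {0..1}"
proof -
  have "real n - 1 > 0" using assms by (metis zero_less_mult_pos2 zero_less_one)
  then show "n \<ge> 2" by linarith
  then show "real (n - 1) * h = 1" using assms(1) by (simp add: of_nat_diff)
  fix i assume "i < n"
  then have "real i * h \<le> (real n - 1) * h" using assms(2) by (intro mult_right_mono) auto
  then show "real i * h \<in> {0..1}" using assms by simp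
qed

lemma ipP_rows:
  "ipP N M hx hy px py v w = (\<Sum>j<M. hy * py j * ip1 N hx px (\<lambda>i. v i j) (\<lambda>i. w i j))"
  unfolding ipP_def ip1_def by (subst sum.swap) (simp add: sum_distrib_left ac_simps)

lemma ipP_transpose:
  "ipP M N hy hx py px (\<lambda>i j. v j i) (\<lambda>i j. w j i) = ipP N M hx hy px py v w"
  unfolding ipP_def by (subst sum.swap) (simp add: ac_simps)

lemma ipP_linear:
  "ipP N M hx hy px py v (\<lambda>i j. a i j + b i j) = ipP N M hx hy px py v a + ipP N M hx hy px py v b"
  "ipP N M hx hy px py v (\<lambda>i j. a i j - b i j) = ipP N M hx hy px py v a - ipP N M hx hy px py v b"
  "ipP N M hx hy px py v (\<lambda>i j. - a i j) = - ipP N M hx hy px py v a"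
  "ipP N M hx hy px py v (\<lambda>i j. r * a i j) = r * ipP N M hx hy px py v a"
  unfolding ipP_def
  by (simp_all add: sum.distrib sum_subtractf sum_negf sum_distrib_left algebra_simps)

lemma dX_matvec: "dX N D w i j = matvec N D (\<lambda>k. w k j) i"
  by (simp add: dX_def matvec_def)

lemma dX_transpose: "dX M D (\<lambda>i j. w j i) = (\<lambda>i j. dY M D w j i)"
  by (simp add: dX_def dY_def)

lemma dX_dY_commute: "dX N Dx (dY M Dy w) = dY M Dy (dX N Dx w)"
  unfolding dX_def dY_def by (intro ext) (simp add: sum_distrib_left ac_simps sum.swap[of _ "{..<N}"])

lemma dX_diff: "dX N D (\<lambda>i j. a i j - b i j) = (\<lambda>i j. dX N D a i j - dX N D b i j)"
  unfolding dX_def by (simp add: right_diff_distrib sum_subtractf)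

lemma dY_diff: "dY M D (\<lambda>i j. a i j - b i j) = (\<lambda>i j. dY M D a i j - dY M D b i j)"
  unfolding dY_def by (simp add: right_diff_distrib sum_subtractf)

lemma has_real_derivative_ipP_self:
  assumes "\<forall>i<N. \<forall>j<M. ((\<lambda>s. V s i j) has_real_derivative r i j) (at t)"
  shows "((\<lambda>s. ipP N M hx hy px py (V s) (V s)) has_real_derivative 2 * ipP N M hx hy px py (V t) r) (at t)"
  unfolding ipP_def sum_distrib_left
  by (intro DERIV_sum) (use assms in \<open>auto intro!: derivative_eq_intros simp: algebra_simps\<close>)

lemma has_real_derivative_normsqP:
  assumes "\<forall>i<N. \<forall>j<M. ((\<lambda>s. V1 s i j) has_real_derivative r1 i j) (at t)
                    \<and> ((\<lambda>s. V2 s i j) has_real_derivative r2 i j) (at t)"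
  shows "((\<lambda>s. normsqP N M hx hy px py (V1 s) (V2 s)) has_real_derivative
           2 * ipP N M hx hy px py (V1 t) r1 + 2 * ipP N M hx hy px py (V2 t) r2) (at t)"
  unfolding normsqP_def using assms by (intro DERIV_add has_real_derivative_ipP_self) auto

lemma continuous_on_normsqP:
  assumes "\<forall>i<N. \<forall>j<M. continuous_on S (\<lambda>t. V1 t i j) \<and> continuous_on S (\<lambda>t. V2 t i j)"
  shows "continuous_on S (\<lambda>t. normsqP N M hx hy px py (V1 t) (V2 t))"
  unfolding normsqP_def ipP_def using assms by (auto intro!: continuous_intros)

lemma gronwall_differential:
  fixes E :: "real \<Rightarrow> real"
  assumes "continuous_on {0..} E"
    and der: "\<And>s. s > 0 \<Longrightarrow> \<exists>d. (E has_real_derivative d) (at s) \<and> d \<le> c * E s"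
    and "t \<ge> 0"
  shows "E t \<le> exp (c * t) * E 0"
proof -
  define f where "f s = exp (- c * s) * E s" for s
  have "f t \<le> f 0"
  proof (rule DERIV_nonpos_imp_decreasing_open[OF \<open>t \<ge> 0\<close>])
    fix s :: real assume "0 < s"
    then obtain d where d: "(E has_real_derivative d) (at s)" "d \<le> c * E s" using der by blast
    have "(f has_real_derivative exp (- c * s) * (d - c * E s)) (at s)"
      unfolding f_def by (rule derivative_eq_intros d(1) refl | simp add: algebra_simps)+
    moreover have "exp (- c * s) * (d - c * E s) \<le> 0"
      using d(2) by (simp add: mult_nonneg_nonpos)
    ultimately show "\<exists>y. (f has_real_derivative y) (at s) \<and> y \<le> 0" by blast
  next
    show "continuous_on {0..t} f"
      unfolding f_def using assms(1) by (auto intro!: continuous_intros elim: continuous_on_subset)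
  qed
  then have "exp (c * t) * f t \<le> exp (c * t) * E 0" by (simp add: f_def)
  then show ?thesis by (simp add: f_def mult.assoc[symmetric] exp_add[symmetric])
qed

section \<open>Boundary penalties\<close>

lemma boundary_point_le:
  fixes h \<epsilon> S g a b c :: real
  assumes "h > 0" and "\<epsilon> \<ge> 0" and "2 * S - g \<le> - \<epsilon> / h"
  shows "(2 * S - g) * (a\<^sup>2 + b\<^sup>2) + 2 * \<epsilon> * b * c \<le> \<epsilon> * h * c\<^sup>2"
proof -
  have "(2 * S - g) * (a\<^sup>2 + b\<^sup>2) \<le> - (\<epsilon> / h) * (a\<^sup>2 + b\<^sup>2)"
    using assms(3) by (intro mult_right_mono) simp_all
  moreover have "\<epsilon> / h * b\<^sup>2 \<le> \<epsilon> / h * (a\<^sup>2 + b\<^sup>2)"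
    using assms(1,2) by (intro mult_left_mono) simp_all
  \<comment> \<open>Young's inequality 2 eps b c \<le> eps b^2 / h + eps h c^2\<close>
  moreover have "0 \<le> \<epsilon> / h * (b - h * c)\<^sup>2"
    using assms(1,2) by simp
  moreover have "\<epsilon> / h * (b - h * c)\<^sup>2 = \<epsilon> / h * b\<^sup>2 - 2 * \<epsilon> * b * c + \<epsilon> * h * c\<^sup>2"
    using assms(1) by (simp add: power2_eq_square field_simps)
  ultimately show ?thesis by linarith
qed

lemma upwind_penalty_outflow:
  assumes "s \<le> neg_part u / 2" and "t \<le> - 1 / (2 * p * h)" and "\<epsilon> \<ge> 0" and "h * p > 0"
  shows "2 * (s + \<epsilon> * t) - u \<le> - \<epsilon> / (h * p)"
proof -
  have "2 * t \<le> - 1 / (h * p)" using assms(2) by (simp add: field_simps)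
  then have "\<epsilon> * (2 * t) \<le> \<epsilon> * (- 1 / (h * p))" using assms(3) by (rule mult_left_mono)
  then show ?thesis using assms(1) by (simp add: neg_part_def algebra_simps)
qed

lemma upwind_penalty_inflow:
  assumes "s \<le> - pos_part u / 2" and "t \<le> - 1 / (2 * p * h)" and "\<epsilon> \<ge> 0" and "h * p > 0"
  shows "2 * (s + \<epsilon> * t) + u \<le> - \<epsilon> / (h * p)"
  using upwind_penalty_outflow[of s "- u" t p h \<epsilon>] assms
  by (simp add: pos_part_def neg_part_def min_def max_def split: if_splits)

section \<open>The energy estimate\<close>

locale sbp_grid =
  fixes N M :: nat and hx hy :: real and px py :: "nat \<Rightarrow> real" and Qx Qy :: "nat \<Rightarrow> nat \<Rightarrow> real"
  assumes N_ge: "N \<ge> 2" and M_ge: "M \<ge> 2" and hx_pos: "hx > 0" and hy_pos: "hy > 0"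
    and px_pos: "\<forall>i<N. px i > 0" and py_pos: "\<forall>j<M. py j > 0"
    and sbp_x: "sbp_Q N Qx" and sbp_y: "sbp_Q M Qy"
begin

abbreviation "ip \<equiv> ipP N M hx hy px py"
abbreviation "dx \<equiv> dX N (sbpD hx px Qx)"
abbreviation "dy \<equiv> dY M (sbpD hy py Qy)"

text \<open>Statements in the y-direction are obtained from the x-direction ones on the transposed grid.\<close>

lemma transposed: "sbp_grid M N hy hx py px Qy Qx"
  using sbp_grid_axioms by (simp add: sbp_grid_def)

lemma wx_pos: "\<forall>i<N. hx * px i > 0"
  using hx_pos px_pos by simp

lemma wy_pos: "\<forall>j<M. hy * py j > 0"
  using hy_pos py_pos by simp

lemma ip_dx_skew:
  "ip a (dx b) + ip b (dx a) = (\<Sum>j<M. hy * py j * (a (N - 1) j * b (N - 1) j - a 0 j * b 0 j))"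
proof -
  have nz: "\<forall>i<N. hx * px i \<noteq> 0" using wx_pos by auto
  have "ip a (dx b) + ip b (dx a) = (\<Sum>j<M. hy * py j *
      (ip1 N hx px (\<lambda>i. a i j) (\<lambda>i. dx b i j) + ip1 N hx px (\<lambda>i. b i j) (\<lambda>i. dx a i j)))"
    by (simp add: ipP_rows sum.distrib distrib_left)
  also have "\<dots> = (\<Sum>j<M. hy * py j * (a (N - 1) j * b (N - 1) j - a 0 j * b 0 j))"
    using ip1_sbpD_skew[OF sbp_x _ nz] N_ge by (simp add: dX_matvec)
  finally show ?thesis .
qed

lemma ip_dy_skew:
  "ip a (dy b) + ip b (dy a) = (\<Sum>i<N. hx * px i * (a i (M - 1) * b i (M - 1) - a i 0 * b i 0))"
proof -
  interpret T: sbp_grid M N hy hx py px Qy Qx by (rule transposed)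
  have "T.ip (\<lambda>i j. u j i) (T.dx (\<lambda>i j. v j i)) = ip u (dy v)" for u v
    unfolding dX_transpose by (rule ipP_transpose)
  then show ?thesis
    using T.ip_dx_skew[of "\<lambda>i j. a j i" "\<lambda>i j. b j i"] by simp
qed

lemma advection_x:
  assumes "ip W (\<lambda>i j. dx (\<lambda>i j. g i j * W i j) i j - g i j * dx W i j) \<le> A * ip W W"
  shows "- 2 * ip W (\<lambda>i j. g i j * dx W i j)
    \<le> A * ip W W - (\<Sum>j<M. hy * py j * (g (N - 1) j * (W (N - 1) j)\<^sup>2 - g 0 j * (W 0 j)\<^sup>2))"
proof -
  let ?gW = "\<lambda>i j. g i j * W i j"
  have "ip W (dx ?gW) + ip ?gW (dx W)
      = (\<Sum>j<M. hy * py j * (g (N - 1) j * (W (N - 1) j)\<^sup>2 - g 0 j * (W 0 j)\<^sup>2))"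
    by (simp add: ip_dx_skew power2_eq_square ac_simps)
  moreover have "ip ?gW (dx W) = ip W (\<lambda>i j. g i j * dx W i j)"
    unfolding ipP_def by (simp add: ac_simps)
  moreover have "ip W (\<lambda>i j. dx ?gW i j - g i j * dx W i j) = ip W (dx ?gW) - ip W (\<lambda>i j. g i j * dx W i j)"
    by (rule ipP_linear(2))
  ultimately show ?thesis using assms by linarith
qed

lemma advection_y:
  assumes "ip W (\<lambda>i j. dy (\<lambda>i j. g i j * W i j) i j - g i j * dy W i j) \<le> A * ip W W"
  shows "- 2 * ip W (\<lambda>i j. g i j * dy W i j)
    \<le> A * ip W W - (\<Sum>i<N. hx * px i * (g i (M - 1) * (W i (M - 1))\<^sup>2 - g i 0 * (W i 0)\<^sup>2))"
proof -
  interpret T: sbp_grid M N hy hx py px Qy Qx by (rule transposed)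
  have tr: "T.ip (\<lambda>i j. W j i) (\<lambda>i j. F j i) = ip W F" for F by (rule ipP_transpose)
  show ?thesis
    using T.advection_x[of "\<lambda>i j. W j i" "\<lambda>i j. g j i" A] assms by (simp add: dX_transpose tr)
qed

lemma commutator_x:
  assumes "commutator_bound N hx px Qx C0"
    and ub: "\<forall>j<M. smooth_on_closed {0..1} (ub j) \<and> 0 \<le> sup_deriv01 (ub j) \<and> sup_deriv01 (ub j) \<le> L"
  shows "ip W (\<lambda>i j. dx (\<lambda>i j. ub j (real i * hx) * W i j) i j - ub j (real i * hx) * dx W i j)
    \<le> \<bar>C0\<bar> * L * ip W W"
  unfolding ipP_rows sum_distrib_left mult.left_commute[of "\<bar>C0\<bar> * L"]
proof (rule sum_mono)
  fix j assume "j \<in> {..<M}"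
  let ?c = "\<lambda>i. dx (\<lambda>i j. ub j (real i * hx) * W i j) i j - ub j (real i * hx) * dx W i j"
  have "ip1 N hx px (\<lambda>i. W i j) ?c \<le> \<bar>C0\<bar> * L * ip1 N hx px (\<lambda>i. W i j) (\<lambda>i. W i j)"
    using ip1_commutator_le[OF assms(1) _ _ _ wx_pos, of "ub j" L "\<lambda>i. W i j"] ub \<open>j \<in> {..<M}\<close>
    by (simp add: dX_matvec)
  then show "hy * py j * ip1 N hx px (\<lambda>i. W i j) ?c
      \<le> hy * py j * (\<bar>C0\<bar> * L * ip1 N hx px (\<lambda>i. W i j) (\<lambda>i. W i j))"
    using wy_pos \<open>j \<in> {..<M}\<close> by (intro mult_left_mono) (simp_all add: less_imp_le)
qed

lemma commutator_y:
  assumes "commutator_bound M hy py Qy C0"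
    and "\<forall>i<N. smooth_on_closed {0..1} (ub i) \<and> 0 \<le> sup_deriv01 (ub i) \<and> sup_deriv01 (ub i) \<le> L"
  shows "ip W (\<lambda>i j. dy (\<lambda>i j. ub i (real j * hy) * W i j) i j - ub i (real j * hy) * dy W i j)
    \<le> \<bar>C0\<bar> * L * ip W W"
proof -
  interpret T: sbp_grid M N hy hx py px Qy Qx by (rule transposed)
  have tr: "T.ip (\<lambda>i j. W j i) (\<lambda>i j. F j i) = ip W F" for F by (rule ipP_transpose)
  show ?thesis
    using T.commutator_x[OF assms, of "\<lambda>i j. W j i"] by (simp add: dX_transpose tr)
qed

lemma trace_x: "(\<Sum>j<M. hy * py j * (hx * px (N - 1) * (c (N - 1) j)\<^sup>2 + hx * px 0 * (c 0 j)\<^sup>2)) \<le> ip c c"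
  unfolding ipP_rows
proof (rule sum_mono)
  fix j assume j: "j \<in> {..<M}"
  have "(\<Sum>i\<in>{0, N - 1}. hx * px i * c i j * c i j) \<le> (\<Sum>i<N. hx * px i * c i j * c i j)"
    using N_ge wx_pos
    by (intro sum_mono2) (auto, metis mult.assoc mult_nonneg_nonneg less_imp_le zero_le_square)
  then have "hx * px (N - 1) * (c (N - 1) j)\<^sup>2 + hx * px 0 * (c 0 j)\<^sup>2 \<le> ip1 N hx px (\<lambda>i. c i j) (\<lambda>i. c i j)"
    using N_ge by (simp add: ip1_def power2_eq_square mult.assoc)
  then show "hy * py j * (hx * px (N - 1) * (c (N - 1) j)\<^sup>2 + hx * px 0 * (c 0 j)\<^sup>2)
      \<le> hy * py j * ip1 N hx px (\<lambda>i. c i j) (\<lambda>i. c i j)"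
    using wy_pos j by (intro mult_left_mono) (simp_all add: less_imp_le)
qed

lemma ip_penB:
  "ip W (penB N M hx hy px py SL SR SD SU W)
    = (\<Sum>j<M. hy * py j * (SL 0 j * (W 0 j)\<^sup>2 + SR (N - 1) j * (W (N - 1) j)\<^sup>2))
    + (\<Sum>i<N. hx * px i * (SD i 0 * (W i 0)\<^sup>2 + SU i (M - 1) * (W i (M - 1))\<^sup>2))"
proof -
  define X where "X i j =
    hy * py j * (W i j * (SL i j * (if i = 0 then W i j else 0) + SR i j * (if i = N - 1 then W i j else 0)))"
    for i j
  define Y where "Y i j =
    hx * px i * (W i j * (SD i j * (if j = 0 then W i j else 0) + SU i j * (if j = M - 1 then W i j else 0)))"
    for i j
  have weights: "a1 * a2 * b1 * b2 * w * (x / (a1 * a2) + y / (b1 * b2))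
      = b1 * b2 * (w * x) + a1 * a2 * (w * y)"
    if "a1 * a2 \<noteq> 0" "b1 * b2 \<noteq> 0" for a1 a2 b1 b2 w x y :: real
    using that by (simp add: field_simps)
  have mult_if: "c * (if P then x else 0) = (if P then c * x else 0)" for c x :: real and P
    by simp
  have "ip W (penB N M hx hy px py SL SR SD SU W) = (\<Sum>i<N. \<Sum>j<M. X i j) + (\<Sum>i<N. \<Sum>j<M. Y i j)"
    unfolding ipP_def penB_def sum.distrib[symmetric] X_def Y_def
    using wx_pos wy_pos by (intro sum.cong refl weights) auto
  also have "(\<Sum>i<N. \<Sum>j<M. X i j) = (\<Sum>j<M. \<Sum>i<N. X i j)"
    by (rule sum.swap)
  finally show ?thesis
    using N_ge M_ge by (simp add: X_def Y_def mult_if distrib_left sum.distrib power2_eq_square ac_simps)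
qed

lemma curl_identity:
  fixes V1 V2 :: "nat \<Rightarrow> nat \<Rightarrow> real"
  defines "c \<equiv> \<lambda>i j. dx V2 i j - dy V1 i j"
  shows "ip V1 (\<lambda>i j. - dy (dy V1) i j + dx (dy V2) i j) + ip V2 (\<lambda>i j. dx (dy V1) i j - dx (dx V2) i j)
       = ip c c + (\<Sum>i<N. hx * px i * (V1 i (M - 1) * c i (M - 1) - V1 i 0 * c i 0))
         - (\<Sum>j<M. hy * py j * (V2 (N - 1) j * c (N - 1) j - V2 0 j * c 0 j))"
proof -
  have "(\<lambda>i j. - dy (dy V1) i j + dx (dy V2) i j) = dy c"
    unfolding c_def dY_diff dX_dY_commute by (simp add: fun_eq_iff)
  moreover have "(\<lambda>i j. dx (dy V1) i j - dx (dx V2) i j) = (\<lambda>i j. - dx c i j)"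
    unfolding c_def dX_diff dX_dY_commute by (simp add: fun_eq_iff)
  moreover have "ip c c = ip c (dx V2) - ip c (dy V1)"
    unfolding c_def by (rule ipP_linear(2))
  ultimately show ?thesis
    using ip_dy_skew[of V1 c] ip_dx_skew[of V2 c] by (simp add: ipP_linear(3))
qed

lemma reaction_le:
  assumes "\<forall>i<N. \<forall>j<M. \<bar>a i j\<bar> \<le> K \<and> \<bar>b i j\<bar> \<le> K \<and> \<bar>c i j\<bar> \<le> K \<and> \<bar>d i j\<bar> \<le> K"
  shows "ip W1 (\<lambda>i j. - a i j * W1 i j + b i j * W2 i j) + ip W2 (\<lambda>i j. c i j * W1 i j - d i j * W2 i j)
       \<le> 2 * K * (ip W1 W1 + ip W2 W2)"
proof -
  have pointwise: "x * (- a' * x + b' * y) + y * (c' * x - d' * y) \<le> 2 * K * (x * x + y * y)"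
    if "\<bar>a'\<bar> \<le> K" "\<bar>b'\<bar> \<le> K" "\<bar>c'\<bar> \<le> K" "\<bar>d'\<bar> \<le> K" for a' b' c' d' x y :: real
  proof -
    have "(- a') * (x * x) \<le> K * (x * x)" "(- d') * (y * y) \<le> K * (y * y)"
      using that by (intro mult_right_mono; simp add: abs_le_iff)+
    moreover have "(b' + c') * (x * y) \<le> K * (x * x + y * y)"
    proof -
      have "(b' + c') * (x * y) \<le> \<bar>b' + c'\<bar> * \<bar>x * y\<bar>"
        by (metis abs_ge_self abs_mult)
      also have "\<dots> \<le> (2 * K) * \<bar>x * y\<bar>"
        using that abs_triangle_ineq[of b' c'] by (intro mult_right_mono) auto
      also have "\<dots> = K * (2 * \<bar>x\<bar> * \<bar>y\<bar>)"
        by (simp add: abs_mult)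
      also have "\<dots> \<le> K * (x * x + y * y)"
        using that sum_squares_bound[of "\<bar>x\<bar>" "\<bar>y\<bar>"]
        by (intro mult_left_mono) (auto simp: power2_eq_square)
      finally show ?thesis .
    qed
    ultimately show ?thesis by (simp add: algebra_simps)
  qed
  have "ip W1 (\<lambda>i j. - a i j * W1 i j + b i j * W2 i j) + ip W2 (\<lambda>i j. c i j * W1 i j - d i j * W2 i j)
     = (\<Sum>i<N. \<Sum>j<M. hx * px i * hy * py j
          * (W1 i j * (- a i j * W1 i j + b i j * W2 i j) + W2 i j * (c i j * W1 i j - d i j * W2 i j)))"
    unfolding ipP_def by (simp add: sum.distrib[symmetric] algebra_simps)
  also have "\<dots> \<le> (\<Sum>i<N. \<Sum>j<M. hx * px i * hy * py j * (2 * K * (W1 i j * W1 i j + W2 i j * W2 i j)))"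
    using assms wx_pos wy_pos
    by (intro sum_mono mult_left_mono pointwise) (auto, metis mult.assoc mult_pos_pos less_imp_le)
  also have "\<dots> = 2 * K * (ip W1 W1 + ip W2 W2)"
    unfolding ipP_def by (simp add: sum.distrib[symmetric] sum_distrib_left algebra_simps)
  finally show ?thesis .
qed

lemma boundary_x_le:
  assumes "\<epsilon> \<ge> 0"
    and R: "\<forall>j<M. 2 * SR (N - 1) j - g (N - 1) j \<le> - \<epsilon> / (hx * px (N - 1))"
    and L: "\<forall>j<M. 2 * SL 0 j + g 0 j \<le> - \<epsilon> / (hx * px 0)"
  shows "- (\<Sum>j<M. hy * py j * (g (N - 1) j * (a (N - 1) j)\<^sup>2 - g 0 j * (a 0 j)\<^sup>2))
         - (\<Sum>j<M. hy * py j * (g (N - 1) j * (b (N - 1) j)\<^sup>2 - g 0 j * (b 0 j)\<^sup>2))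
         + 2 * (\<Sum>j<M. hy * py j * (SL 0 j * (a 0 j)\<^sup>2 + SR (N - 1) j * (a (N - 1) j)\<^sup>2))
         + 2 * (\<Sum>j<M. hy * py j * (SL 0 j * (b 0 j)\<^sup>2 + SR (N - 1) j * (b (N - 1) j)\<^sup>2))
         + 2 * (\<epsilon> * (\<Sum>j<M. hy * py j * (b (N - 1) j * c (N - 1) j - b 0 j * c 0 j)))
       \<le> \<epsilon> * ip c c"
proof -
  \<comment> \<open>at x = 0 the outward normal is reversed, so the point bound is used for -g and -b there\<close>
  let ?F = "\<lambda>j. (2 * SR (N - 1) j - g (N - 1) j) * ((a (N - 1) j)\<^sup>2 + (b (N - 1) j)\<^sup>2)
      + 2 * \<epsilon> * b (N - 1) j * c (N - 1) j
      + ((2 * SL 0 j - - g 0 j) * ((a 0 j)\<^sup>2 + (- b 0 j)\<^sup>2) + 2 * \<epsilon> * - b 0 j * c 0 j)"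
  have "?F j \<le> \<epsilon> * (hx * px (N - 1) * (c (N - 1) j)\<^sup>2 + hx * px 0 * (c 0 j)\<^sup>2)" if "j < M" for j
  proof -
    have "?F j \<le> \<epsilon> * (hx * px (N - 1)) * (c (N - 1) j)\<^sup>2 + \<epsilon> * (hx * px 0) * (c 0 j)\<^sup>2"
    proof (intro add_mono boundary_point_le assms(1))
      show "0 < hx * px (N - 1)" "0 < hx * px 0" using wx_pos N_ge by auto
      show "2 * SR (N - 1) j - g (N - 1) j \<le> - \<epsilon> / (hx * px (N - 1))"
        "2 * SL 0 j - - g 0 j \<le> - \<epsilon> / (hx * px 0)"
        using R L that by auto
    qed
    then show ?thesis by (simp add: algebra_simps)
  qed
  then have "(\<Sum>j<M. hy * py j * ?F j)
      \<le> \<epsilon> * (\<Sum>j<M. hy * py j * (hx * px (N - 1) * (c (N - 1) j)\<^sup>2 + hx * px 0 * (c 0 j)\<^sup>2))"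
    unfolding sum_distrib_left using wy_pos
    by (intro sum_mono) (simp add: mult.left_commute[of \<epsilon>] mult_left_mono less_imp_le)
  also have "\<dots> \<le> \<epsilon> * ip c c"
    using trace_x assms(1) by (rule mult_left_mono)
  finally show ?thesis
    by (simp add: sum.distrib sum_subtractf sum_distrib_left algebra_simps)
qed

lemma boundary_y_le:
  assumes "\<epsilon> \<ge> 0"
    and "\<forall>i<N. 2 * SU i (M - 1) - g i (M - 1) \<le> - \<epsilon> / (hy * py (M - 1))"
    and "\<forall>i<N. 2 * SD i 0 + g i 0 \<le> - \<epsilon> / (hy * py 0)"
  shows "- (\<Sum>i<N. hx * px i * (g i (M - 1) * (a i (M - 1))\<^sup>2 - g i 0 * (a i 0)\<^sup>2))
         - (\<Sum>i<N. hx * px i * (g i (M - 1) * (b i (M - 1))\<^sup>2 - g i 0 * (b i 0)\<^sup>2))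
         + 2 * (\<Sum>i<N. hx * px i * (SD i 0 * (a i 0)\<^sup>2 + SU i (M - 1) * (a i (M - 1))\<^sup>2))
         + 2 * (\<Sum>i<N. hx * px i * (SD i 0 * (b i 0)\<^sup>2 + SU i (M - 1) * (b i (M - 1))\<^sup>2))
         - 2 * (\<epsilon> * (\<Sum>i<N. hx * px i * (b i (M - 1) * c i (M - 1) - b i 0 * c i 0)))
       \<le> \<epsilon> * ip c c"
proof -
  interpret T: sbp_grid M N hy hx py px Qy Qx by (rule transposed)
  have "T.ip (\<lambda>i j. c j i) (\<lambda>i j. c j i) = ip c c" by (rule ipP_transpose)
  moreover have "(\<Sum>i<N. hx * px i * (- b i (M - 1) * c i (M - 1) - - b i 0 * c i 0))
      = - (\<Sum>i<N. hx * px i * (b i (M - 1) * c i (M - 1) - b i 0 * c i 0))"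
    by (simp add: sum_negf[symmetric] algebra_simps)
  ultimately show ?thesis
    using T.boundary_x_le[where SR = "\<lambda>i j. SU j i" and SL = "\<lambda>i j. SD j i" and g = "\<lambda>i j. g j i"
        and a = "\<lambda>i j. a j i" and b = "\<lambda>i j. - b j i" and c = "\<lambda>i j. c j i", OF assms]
    by simp
qed

lemma ip_scheme_split:
  "ip W (\<lambda>i j. - a i j * b i j - c i j * d i j + r i j - \<epsilon> * x i j + p i j)
    = - ip W (\<lambda>i j. a i j * b i j) - ip W (\<lambda>i j. c i j * d i j) + ip W r - \<epsilon> * ip W x + ip W p"
  by (simp add: ipP_linear)

lemma energy_estimate:
  fixes \<epsilon> A1 A2 K :: real
  assumes eps: "\<epsilon> \<ge> 0"
    and comm1: "\<And>W. ip W (\<lambda>i j. dx (\<lambda>i j. g1 i j * W i j) i j - g1 i j * dx W i j) \<le> A1 * ip W W"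
    and comm2: "\<And>W. ip W (\<lambda>i j. dy (\<lambda>i j. g2 i j * W i j) i j - g2 i j * dy W i j) \<le> A2 * ip W W"
    and K: "\<forall>i<N. \<forall>j<M. \<bar>dx g1 i j\<bar> \<le> K \<and> \<bar>dx g2 i j\<bar> \<le> K \<and> \<bar>dy g1 i j\<bar> \<le> K \<and> \<bar>dy g2 i j\<bar> \<le> K"
    and pen_R: "\<forall>j<M. 2 * SR (N - 1) j - g1 (N - 1) j \<le> - \<epsilon> / (hx * px (N - 1))"
    and pen_L: "\<forall>j<M. 2 * SL 0 j + g1 0 j \<le> - \<epsilon> / (hx * px 0)"
    and pen_U: "\<forall>i<N. 2 * SU i (M - 1) - g2 i (M - 1) \<le> - \<epsilon> / (hy * py (M - 1))"
    and pen_D: "\<forall>i<N. 2 * SD i 0 + g2 i 0 \<le> - \<epsilon> / (hy * py 0)"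
  shows "2 * ip W1 (\<lambda>i j. - g1 i j * dx W1 i j - g2 i j * dy W1 i j
             + (- dy g2 i j * W1 i j + dy g1 i j * W2 i j)
             - \<epsilon> * (- dy (dy W1) i j + dx (dy W2) i j)
             + penB N M hx hy px py SL SR SD SU W1 i j)
       + 2 * ip W2 (\<lambda>i j. - g1 i j * dx W2 i j - g2 i j * dy W2 i j
             + (dx g2 i j * W1 i j - dx g1 i j * W2 i j)
             - \<epsilon> * (dx (dy W1) i j - dx (dx W2) i j)
             + penB N M hx hy px py SL SR SD SU W2 i j)
       \<le> (A1 + A2 + 4 * K) * (ip W1 W1 + ip W2 W2)"
proof -
  let ?c = "\<lambda>i j. dx W2 i j - dy W1 i j"
  have reaction: "ip W1 (\<lambda>i j. - dy g2 i j * W1 i j + dy g1 i j * W2 i j)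
      + ip W2 (\<lambda>i j. dx g2 i j * W1 i j - dx g1 i j * W2 i j) \<le> 2 * K * (ip W1 W1 + ip W2 W2)"
    by (rule reaction_le) (use K in auto)
  have curl: "\<epsilon> * ip W1 (\<lambda>i j. - dy (dy W1) i j + dx (dy W2) i j)
      + \<epsilon> * ip W2 (\<lambda>i j. dx (dy W1) i j - dx (dx W2) i j)
      = \<epsilon> * ip ?c ?c + \<epsilon> * (\<Sum>i<N. hx * px i * (W1 i (M - 1) * ?c i (M - 1) - W1 i 0 * ?c i 0))
        - \<epsilon> * (\<Sum>j<M. hy * py j * (W2 (N - 1) j * ?c (N - 1) j - W2 0 j * ?c 0 j))"
    unfolding distrib_left[symmetric] right_diff_distrib[symmetric] by (simp only: curl_identity)
  have rate: "(A1 + A2 + 4 * K) * (ip W1 W1 + ip W2 W2)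
      = A1 * ip W1 W1 + A1 * ip W2 W2 + A2 * ip W1 W1 + A2 * ip W2 W2 + 2 * (2 * K * (ip W1 W1 + ip W2 W2))"
    by (simp add: algebra_simps)
  show ?thesis
    using advection_x[OF comm1, of W1] advection_x[OF comm1, of W2]
      advection_y[OF comm2, of W1] advection_y[OF comm2, of W2]
      ip_penB[of W1 SL SR SD SU] ip_penB[of W2 SL SR SD SU]
      boundary_x_le[where g = g1 and SR = SR and SL = SL and a = W1 and b = W2 and c = ?c, OF eps pen_R pen_L]
      boundary_y_le[where g = g2 and SU = SU and SD = SD and a = W2 and b = W1 and c = ?c, OF eps pen_U pen_D]
      reaction curl rate
    unfolding ip_scheme_split by argo
qed

lemma energy_stability:
  fixes u1 u2 :: "real \<times> real \<Rightarrow> real"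
    and V1 V2 :: "real \<Rightarrow> nat \<Rightarrow> nat \<Rightarrow> real"
    and sL1 sR1 sD1 sU1 sL2 sR2 sD2 sU2 :: "nat \<Rightarrow> nat \<Rightarrow> real" and \<epsilon> :: real
  defines "g1 \<equiv> \<lambda>i j. u1 (real i * hx, real j * hy)" and "g2 \<equiv> \<lambda>i j. u2 (real i * hx, real j * hy)"
    and "SL \<equiv> \<lambda>i j. sL1 i j + \<epsilon> * sL2 i j" and "SR \<equiv> \<lambda>i j. sR1 i j + \<epsilon> * sR2 i j"
    and "SD \<equiv> \<lambda>i j. sD1 i j + \<epsilon> * sD2 i j" and "SU \<equiv> \<lambda>i j. sU1 i j + \<epsilon> * sU2 i j"
  assumes scheme: "\<forall>t>0. \<forall>i<N. \<forall>j<M.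
           ((\<lambda>s. V1 s i j) has_real_derivative
             - g1 i j * dx (V1 t) i j - g2 i j * dy (V1 t) i j
             + (- dy g2 i j * V1 t i j + dy g1 i j * V2 t i j)
             - \<epsilon> * (- dy (dy (V1 t)) i j + dx (dy (V2 t)) i j)
             + penB N M hx hy px py SL SR SD SU (V1 t) i j) (at t)
         \<and> ((\<lambda>s. V2 s i j) has_real_derivative
             - g1 i j * dx (V2 t) i j - g2 i j * dy (V2 t) i j
             + (dx g2 i j * V1 t i j - dx g1 i j * V2 t i j)
             - \<epsilon> * (dx (dy (V1 t)) i j - dx (dx (V2 t)) i j)
             + penB N M hx hy px py SL SR SD SU (V2 t) i j) (at t)"
    and cont: "\<forall>i<N. \<forall>j<M. continuous_on {0..} (\<lambda>t. V1 t i j) \<and> continuous_on {0..} (\<lambda>t. V2 t i j)"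
    and "\<epsilon> > 0" and mesh_x: "(real N - 1) * hx = 1" and mesh_y: "(real M - 1) * hy = 1"
    and p: "p = px 0" "p = px (N - 1)" "p = py 0" "p = py (M - 1)"
    and comm_x: "commutator_bound N hx px Qx C0" and comm_y: "commutator_bound M hy py Qy C0"
    and u1_lines: "\<And>y. y \<in> {0..1} \<Longrightarrow> smooth_on_closed {0..1} (\<lambda>x. u1 (x, y))
        \<and> 0 \<le> sup_deriv01 (\<lambda>x. u1 (x, y)) \<and> sup_deriv01 (\<lambda>x. u1 (x, y)) \<le> L1"
    and u2_lines: "\<And>x. x \<in> {0..1} \<Longrightarrow> smooth_on_closed {0..1} (\<lambda>y. u2 (x, y))
        \<and> 0 \<le> sup_deriv01 (\<lambda>y. u2 (x, y)) \<and> sup_deriv01 (\<lambda>y. u2 (x, y)) \<le> L2"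
    and K: "\<forall>i<N. \<forall>j<M. \<bar>dx g1 i j\<bar> \<le> K \<and> \<bar>dx g2 i j\<bar> \<le> K \<and> \<bar>dy g1 i j\<bar> \<le> K \<and> \<bar>dy g2 i j\<bar> \<le> K"
    and sR1: "\<forall>j<M. sR1 (N - 1) j \<le> neg_part (u1 (1, real j * hy)) / 2"
    and sL1: "\<forall>j<M. sL1 0 j \<le> - pos_part (u1 (0, real j * hy)) / 2"
    and sU1: "\<forall>i<N. sU1 i (M - 1) \<le> neg_part (u2 (real i * hx, 1)) / 2"
    and sD1: "\<forall>i<N. sD1 i 0 \<le> - pos_part (u2 (real i * hx, 0)) / 2"
    and "tR \<le> - 1 / (2 * p * hx)" "tL \<le> - 1 / (2 * p * hx)"
    and "tU \<le> - 1 / (2 * p * hy)" "tD \<le> - 1 / (2 * p * hy)"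
    and sR2: "\<forall>i<N. \<forall>j<M. sR2 i j = (if i = N - 1 then tR else 0)"
    and sL2: "\<forall>i<N. \<forall>j<M. sL2 i j = (if i = 0 then tL else 0)"
    and sU2: "\<forall>i<N. \<forall>j<M. sU2 i j = (if j = M - 1 then tU else 0)"
    and sD2: "\<forall>i<N. \<forall>j<M. sD2 i j = (if j = 0 then tD else 0)"
    and "t \<ge> 0"
  shows "normsqP N M hx hy px py (V1 t) (V2 t)
    \<le> exp ((\<bar>C0\<bar> * L1 + \<bar>C0\<bar> * L2 + 4 * K) * t) * normsqP N M hx hy px py (V1 0) (V2 0)"
proof (rule gronwall_differential[OF continuous_on_normsqP[OF cont] _ \<open>t \<ge> 0\<close>])
  note x_mesh = unit_mesh[OF mesh_x hx_pos] and y_mesh = unit_mesh[OF mesh_y hy_pos]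
  have comm1: "ip W (\<lambda>i j. dx (\<lambda>i j. g1 i j * W i j) i j - g1 i j * dx W i j) \<le> \<bar>C0\<bar> * L1 * ip W W" for W
    using commutator_x[OF comm_x, of "\<lambda>j x. u1 (x, real j * hy)" L1] u1_lines y_mesh(3)
    by (simp add: g1_def)
  have comm2: "ip W (\<lambda>i j. dy (\<lambda>i j. g2 i j * W i j) i j - g2 i j * dy W i j) \<le> \<bar>C0\<bar> * L2 * ip W W" for W
    using commutator_y[OF comm_y, of "\<lambda>i y. u2 (real i * hx, y)" L2] u2_lines x_mesh(3)
    by (simp add: g2_def)
  have "p > 0" using p px_pos N_ge by auto
  have pen_R: "\<forall>j<M. 2 * SR (N - 1) j - g1 (N - 1) j \<le> - \<epsilon> / (hx * px (N - 1))"
    using upwind_penalty_outflow \<open>p > 0\<close> hx_pos p sR1 sR2 x_mesh \<open>\<epsilon> > 0\<close> \<open>tR \<le> _\<close>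
    by (auto simp: SR_def g1_def)
  have pen_L: "\<forall>j<M. 2 * SL 0 j + g1 0 j \<le> - \<epsilon> / (hx * px 0)"
    using upwind_penalty_inflow \<open>p > 0\<close> hx_pos p sL1 sL2 x_mesh \<open>\<epsilon> > 0\<close> \<open>tL \<le> _\<close>
    by (auto simp: SL_def g1_def)
  have pen_U: "\<forall>i<N. 2 * SU i (M - 1) - g2 i (M - 1) \<le> - \<epsilon> / (hy * py (M - 1))"
    using upwind_penalty_outflow \<open>p > 0\<close> hy_pos p sU1 sU2 y_mesh \<open>\<epsilon> > 0\<close> \<open>tU \<le> _\<close>
    by (auto simp: SU_def g2_def)
  have pen_D: "\<forall>i<N. 2 * SD i 0 + g2 i 0 \<le> - \<epsilon> / (hy * py 0)"
    using upwind_penalty_inflow \<open>p > 0\<close> hy_pos p sD1 sD2 y_mesh \<open>\<epsilon> > 0\<close> \<open>tD \<le> _\<close>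
    by (auto simp: SD_def g2_def)
  fix s :: real assume "s > 0"
  show "\<exists>d. ((\<lambda>s. normsqP N M hx hy px py (V1 s) (V2 s)) has_real_derivative d) (at s)
      \<and> d \<le> (\<bar>C0\<bar> * L1 + \<bar>C0\<bar> * L2 + 4 * K) * normsqP N M hx hy px py (V1 s) (V2 s)"
  proof -
    note d = has_real_derivative_normsqP[where hx = hx and hy = hy and px = px and py = py,
        OF mp[OF spec[OF scheme] \<open>s > 0\<close>]]
    note e = energy_estimate[where ?W1.0 = "V1 s" and ?W2.0 = "V2 s" and ?g1.0 = g1 and ?g2.0 = g2
        and SL = SL and SR = SR and SD = SD and SU = SU, OF _ comm1 comm2 K pen_R pen_L pen_U pen_D]
    show ?thesis using d e \<open>\<epsilon> > 0\<close> unfolding normsqP_def by auto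
  qed
qed

end

theorem theorem3p4:
  fixes u1 u2 :: "real \<times> real \<Rightarrow> real" and \<epsilon> C0 K :: real
  assumes u1_smooth: "smooth_on_closed ({0..1} \<times> {0..1}) u1"
      and u2_smooth: "smooth_on_closed ({0..1} \<times> {0..1}) u2"
      and eps_pos: "\<epsilon> > 0"
  shows "\<exists>c::real. \<forall>(N::nat) (M::nat) (hx::real) (hy::real) (px::nat \<Rightarrow> real) (py::nat \<Rightarrow> real)
           (Qx::nat \<Rightarrow> nat \<Rightarrow> real) (Qy::nat \<Rightarrow> nat \<Rightarrow> real) (p::real)
           (sL1::nat \<Rightarrow> nat \<Rightarrow> real) (sR1::nat \<Rightarrow> nat \<Rightarrow> real) (sD1::nat \<Rightarrow> nat \<Rightarrow> real) (sU1::nat \<Rightarrow> nat \<Rightarrow> real)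
           (sL2::nat \<Rightarrow> nat \<Rightarrow> real) (sR2::nat \<Rightarrow> nat \<Rightarrow> real) (sD2::nat \<Rightarrow> nat \<Rightarrow> real) (sU2::nat \<Rightarrow> nat \<Rightarrow> real)
           (tL::real) (tR::real) (tD::real) (tU::real)
           (V1::real \<Rightarrow> nat \<Rightarrow> nat \<Rightarrow> real) (V2::real \<Rightarrow> nat \<Rightarrow> nat \<Rightarrow> real).
     let Dx = sbpD hx px Qx; Dy = sbpD hy py Qy;
         g1 = (\<lambda>i j. u1 (real i * hx, real j * hy));
         g2 = (\<lambda>i j. u2 (real i * hx, real j * hy));
         SL = (\<lambda>i j. sL1 i j + \<epsilon> * sL2 i j); SR = (\<lambda>i j. sR1 i j + \<epsilon> * sR2 i j);
         SD = (\<lambda>i j. sD1 i j + \<epsilon> * sD2 i j); SU = (\<lambda>i j. sU1 i j + \<epsilon> * sU2 i j);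
         B = penB N M hx hy px py SL SR SD SU;
         rhs1 = (\<lambda>W1 W2 i j.
             - g1 i j * dX N Dx W1 i j - g2 i j * dY M Dy W1 i j
             + (- dY M Dy g2 i j * W1 i j + dY M Dy g1 i j * W2 i j)
             - \<epsilon> * (- dY M Dy (dY M Dy W1) i j + dX N Dx (dY M Dy W2) i j)
             + B W1 i j);
         rhs2 = (\<lambda>W1 W2 i j.
             - g1 i j * dX N Dx W2 i j - g2 i j * dY M Dy W2 i j
             + (dX N Dx g2 i j * W1 i j - dX N Dx g1 i j * W2 i j)
             - \<epsilon> * (dX N Dx (dY M Dy W1) i j - dX N Dx (dX N Dx W2) i j)
             + B W2 i j)
     in
     ( \<comment> \<open>grid\<close>
       hx > 0 \<and> hy > 0 \<and> (real N - 1) * hx = 1 \<and> (real M - 1) * hy = 1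
       \<comment> \<open>SBP operators\<close>
     \<and> (\<forall>i<N. px i > 0) \<and> (\<forall>j<M. py j > 0)
     \<and> sbp_Q N Qx \<and> sbp_Q M Qy
     \<and> p = px 0 \<and> p = px (N - 1) \<and> p = py 0 \<and> p = py (M - 1)
     \<and> commutator_bound N hx px Qx C0 \<and> commutator_bound M hy py Qy C0
       \<comment> \<open>bounds on the derivative approximations of u1, u2\<close>
     \<and> (\<forall>i<N. \<forall>j<M. \<bar>dX N Dx g1 i j\<bar> \<le> K \<and> \<bar>dX N Dx g2 i j\<bar> \<le> K
                   \<and> \<bar>dY M Dy g1 i j\<bar> \<le> K \<and> \<bar>dY M Dy g2 i j\<bar> \<le> K)
       \<comment> \<open>penalty parameters Sigma'\<close>
     \<and> (\<forall>j<M. sR1 (N - 1) j \<le> neg_part (u1 (1, real j * hy)) / 2)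
     \<and> (\<forall>j<M. sL1 0 j \<le> - pos_part (u1 (0, real j * hy)) / 2)
     \<and> (\<forall>i<N. sU1 i (M - 1) \<le> neg_part (u2 (real i * hx, 1)) / 2)
     \<and> (\<forall>i<N. sD1 i 0 \<le> - pos_part (u2 (real i * hx, 0)) / 2)
     \<and> (\<forall>i<N. \<forall>j<M. i \<noteq> N - 1 \<longrightarrow> sR1 i j = 0) \<and> (\<forall>i<N. \<forall>j<M. i \<noteq> 0 \<longrightarrow> sL1 i j = 0)
     \<and> (\<forall>i<N. \<forall>j<M. j \<noteq> M - 1 \<longrightarrow> sU1 i j = 0) \<and> (\<forall>i<N. \<forall>j<M. j \<noteq> 0 \<longrightarrow> sD1 i j = 0)
       \<comment> \<open>penalty parameters Sigma'' (constant boundary values tK)\<close>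
     \<and> tR \<le> - 1 / (2 * p * hx) \<and> tL \<le> - 1 / (2 * p * hx)
     \<and> tU \<le> - 1 / (2 * p * hy) \<and> tD \<le> - 1 / (2 * p * hy)
     \<and> (\<forall>i<N. \<forall>j<M. sR2 i j = (if i = N - 1 then tR else 0))
     \<and> (\<forall>i<N. \<forall>j<M. sL2 i j = (if i = 0 then tL else 0))
     \<and> (\<forall>i<N. \<forall>j<M. sU2 i j = (if j = M - 1 then tU else 0))
     \<and> (\<forall>i<N. \<forall>j<M. sD2 i j = (if j = 0 then tD else 0))
       \<comment> \<open>V solves the semi-discrete scheme (g = 0)\<close>
     \<and> (\<forall>i<N. \<forall>j<M. continuous_on {0..} (\<lambda>t. V1 t i j) \<and> continuous_on {0..} (\<lambda>t. V2 t i j))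
     \<and> (\<forall>t>0. \<forall>i<N. \<forall>j<M.
           ((\<lambda>s. V1 s i j) has_real_derivative rhs1 (V1 t) (V2 t) i j) (at t)
         \<and> ((\<lambda>s. V2 s i j) has_real_derivative rhs2 (V1 t) (V2 t) i j) (at t)))
     \<longrightarrow> (\<forall>t\<ge>0. normsqP N M hx hy px py (V1 t) (V2 t)
                  \<le> exp (c * t) * normsqP N M hx hy px py (V1 0) (V2 0))"
proof -
  obtain L1 where L1: "\<And>y. y \<in> {0..1} \<Longrightarrow> smooth_on_closed {0..1} (\<lambda>x. u1 (x, y))
      \<and> 0 \<le> sup_deriv01 (\<lambda>x. u1 (x, y)) \<and> sup_deriv01 (\<lambda>x. u1 (x, y)) \<le> L1"
    using smooth_coordinate_lines[OF u1_smooth] by metis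
  obtain L2 where L2: "\<And>x. x \<in> {0..1} \<Longrightarrow> smooth_on_closed {0..1} (\<lambda>y. u2 (x, y))
      \<and> 0 \<le> sup_deriv01 (\<lambda>y. u2 (x, y)) \<and> sup_deriv01 (\<lambda>y. u2 (x, y)) \<le> L2"
    using smooth_coordinate_lines[OF u2_smooth] by metis
  show ?thesis
  proof (intro exI[of _ "\<bar>C0\<bar> * L1 + \<bar>C0\<bar> * L2 + 4 * K"] allI, unfold Let_def, intro impI, elim conjE, goal_cases)
    case (1 N M hx hy px py Qx Qy p sL1 sR1 sD1 sU1 sL2 sR2 sD2 sU2 tL tR tD tU V1 V2)
    interpret sbp_grid N M hx hy px py Qx Qy
      using 1 unit_mesh(1) by unfold_locales auto
    show ?case
      using 1 L1 L2 eps_pos by - (intro allI impI, rule energy_stability, assumption+)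
  qed
qed

end
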